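(* Let $m\geq 1$, $n\geq 3$ and $p\geq 2$ be integers, and let $i,j\in V$. There exists a walk of length $pn-1$ from $i$ to $j$ in $D^m_n$ if and only if there exists a walk of length $n-1$ from $i$ to $j$ in $D^m_n$. In such cases, the number of walks of length $pn-1$ from $i$ to $j$ in $D^m_n$ is exactly $m^{p-1}$.
   Context: For integers $m\geq 1$, $n\geq 3$, the oriented Dutch windmill graph $D^m_n$ is the directed graph with vertex set $V=\{1,2,\ldots,m(n-1)+1\}$ whose directed edges $(a,b)$ are exactly: $(1,(k-1)(n-1)+2)$ for $k\in\{1,\ldots,m\}$; $((k-1)(n-1)+i,(k-1)(n-1)+i+1)$ for $k\in\{1,\ldots,m\}$ and $i\in\{2,\ldots,n-1\}$; and $((k-1)(n-1)+n,1)$ for $k\in\{1,\ldots,m\}$. A walk is a sequence of vertices $\langle v_1,\ldots,v_r\rangle$ in which each $(v_t,v_{t+1})$ is an edge; its length is $r-1$; walks are distinct when they are distinct sequences. *)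

theory Defs
  imports Main
begin

definition dw_verts :: "nat \<Rightarrow> nat \<Rightarrow> nat set" where
  "dw_verts m n = {1 .. m * (n - 1) + 1}"

definition dw_edge :: "nat \<Rightarrow> nat \<Rightarrow> nat \<Rightarrow> nat \<Rightarrow> bool" where
  "dw_edge m n a b \<longleftrightarrow>
     (\<exists>k\<in>{1..m}. a = 1 \<and> b = (k - 1) * (n - 1) + 2) \<or>
     (\<exists>k\<in>{1..m}. \<exists>i\<in>{2..n - 1}. a = (k - 1) * (n - 1) + i \<and> b = (k - 1) * (n - 1) + i + 1) \<or>
     (\<exists>k\<in>{1..m}. a = (k - 1) * (n - 1) + n \<and> b = 1)"

definition dw_is_walk :: "nat \<Rightarrow> nat \<Rightarrow> nat list \<Rightarrow> bool" where
  "dw_is_walk m n w \<longleftrightarrow> w \<noteq> [] \<and> set w \<subseteq> dw_verts m n \<and>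
     (\<forall>t. Suc t < length w \<longrightarrow> dw_edge m n (w ! t) (w ! Suc t))"

definition dw_walks :: "nat \<Rightarrow> nat \<Rightarrow> nat \<Rightarrow> nat \<Rightarrow> nat \<Rightarrow> nat list set" where
  "dw_walks m n L i j = {w. dw_is_walk m n w \<and> length w = L + 1 \<and> hd w = i \<and> last w = j}"

end

theory Submission
  imports Defs
begin

(* Write a vertex other than the hub 1 as position c \<in> {1..n-1} on blade k < m. A blade vertex
   has a single out-neighbour, so a walk leaving position c is forced and reaches the hub after
   n - c steps; from the hub a walk picks one of the m blades and is then forced for n - 1 steps.
   Hence the number N(L) of walks of length L out of the hub satisfies N(n + L) = m N(L), and a
   walk of length q n + (n - 1) from any vertex makes q more returns to the hub than one of length
   n - 1, which gives the factor m^q. A walk of length n - 1 is forced up to its first visit of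
   the hub and then stays on the blade determined by its endpoint, so there is at most one. *)

definition walks :: "'a set \<Rightarrow> ('a \<Rightarrow> 'a \<Rightarrow> bool) \<Rightarrow> nat \<Rightarrow> 'a \<Rightarrow> 'a \<Rightarrow> 'a list set" where
  "walks V E L i j =
     {w. set w \<subseteq> V \<and> successively E w \<and> length w = Suc L \<and> hd w = i \<and> last w = j}"

lemma dw_walks_eq_walks: "dw_walks m n L i j = walks (dw_verts m n) (dw_edge m n) L i j"
  unfolding dw_walks_def dw_is_walk_def walks_def successively_conv_nth by auto

lemma walks_0: "walks V E 0 i j = (if i = j \<and> i \<in> V then {[i]} else {})"
  unfolding walks_def by (auto simp: length_Suc_conv)

lemma walks_Suc:
  assumes "i \<in> V"
  shows "walks V E (Suc L) i j = (\<Union>x\<in>{x \<in> V. E i x}. (#) i ` walks V E L x j)"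
proof (intro set_eqI iffI)
  fix w assume w: "w \<in> walks V E (Suc L) i j"
  then obtain w' where w': "w = i # w'"
    unfolding walks_def by (cases w) auto
  with w have "w' \<noteq> []"
    unfolding walks_def by auto
  with w w' have "hd w' \<in> {x \<in> V. E i x}" "w' \<in> walks V E L (hd w') j"
    unfolding walks_def by (auto simp: successively_Cons)
  with w' show "w \<in> (\<Union>x\<in>{x \<in> V. E i x}. (#) i ` walks V E L x j)"
    by blast
next
  fix w assume "w \<in> (\<Union>x\<in>{x \<in> V. E i x}. (#) i ` walks V E L x j)"
  then show "w \<in> walks V E (Suc L) i j"
    using assms unfolding walks_def by (auto simp: successively_Cons)
qed

lemma card_walks_0: "card (walks V E 0 i j) = (if i = j \<and> i \<in> V then 1 else 0)"
  by (auto simp: walks_0)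

lemma finite_walks:
  assumes "finite V"
  shows "finite (walks V E L i j)"
proof (rule finite_subset)
  show "walks V E L i j \<subseteq> {w. set w \<subseteq> V \<and> length w = Suc L}"
    unfolding walks_def by auto
  show "finite {w. set w \<subseteq> V \<and> length w = Suc L}"
    using assms by (rule finite_lists_length_eq)
qed

lemma card_walks_Suc:
  assumes "finite V" and "i \<in> V"
  shows "card (walks V E (Suc L) i j) = (\<Sum>x | x \<in> V \<and> E i x. card (walks V E L x j))"
  unfolding walks_Suc[OF assms(2)] using assms(1)
  by (subst card_UN_disjoint) (auto simp: finite_walks card_image, auto simp: walks_def)

lemma finite_dw_verts [simp]: "finite (dw_verts m n)"
  by (simp add: dw_verts_def)

(* Position c of blade k is the paper's vertex (k' - 1)(n - 1) + i with k' = k + 1, i = c + 1. *)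
definition blade_vertex :: "nat \<Rightarrow> nat \<Rightarrow> nat \<Rightarrow> nat" where
  "blade_vertex n k c = k * (n - 1) + c + 1"

lemma blade_vertex_in_dw_verts:
  assumes "k < m" and "1 \<le> c" and "c \<le> n - 1"
  shows "blade_vertex n k c \<in> dw_verts m n"
proof -
  have "k * (n - 1) + (n - 1) \<le> m * (n - 1)"
    using assms(1) by (metis Suc_leI add.commute mult_Suc mult_le_mono1)
  then show ?thesis
    using assms unfolding blade_vertex_def dw_verts_def by auto
qed

lemma blade_vertex_neq_hub: "1 \<le> c \<Longrightarrow> blade_vertex n k c \<noteq> 1"
  by (simp add: blade_vertex_def)

lemma blade_vertex_eq_iff:
  assumes "1 \<le> c" "c \<le> n - 1" "1 \<le> c'" "c' \<le> n - 1"
  shows "blade_vertex n k c = blade_vertex n k' c' \<longleftrightarrow> k = k' \<and> c = c'"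
proof
  assume "blade_vertex n k c = blade_vertex n k' c'"
  then have eq: "k * (n - 1) + (c - 1) = k' * (n - 1) + (c' - 1)"
    using assms unfolding blade_vertex_def by auto
  have "c - 1 < n - 1" "c' - 1 < n - 1"
    using assms by auto
  then have "k = k'" "c - 1 = c' - 1"
    using arg_cong[OF eq, of "\<lambda>x. x div (n - 1)"] arg_cong[OF eq, of "\<lambda>x. x mod (n - 1)"]
    by simp_all
  then show "k = k' \<and> c = c'"
    using assms by auto
qed simp

lemma dw_verts_cases:
  assumes "x \<in> dw_verts m n" and "2 \<le> n"
  obtains "x = 1"
  | k c where "k < m" "1 \<le> c" "c \<le> n - 1" "x = blade_vertex n k c"
proof (cases "x = 1")
  case False
  then have x: "2 \<le> x" "x - 2 < m * (n - 1)"
    using assms(1) unfolding dw_verts_def by auto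
  have "(x - 2) div (n - 1) < m"
    using x assms(2) by (simp add: less_mult_imp_div_less)
  moreover have "x = blade_vertex n ((x - 2) div (n - 1)) ((x - 2) mod (n - 1) + 1)"
    using x unfolding blade_vertex_def by (metis add.assoc div_mult_mod_eq le_add_diff_inverse2 one_add_one)
  moreover have "(x - 2) mod (n - 1) + 1 \<le> n - 1"
    using assms(2) by (simp add: Suc_leI)
  ultimately show thesis
    using that(2) by auto
qed (use that in blast)

lemma dw_edge_hub_iff:
  assumes "2 \<le> n"
  shows "dw_edge m n 1 b \<longleftrightarrow> (\<exists>k<m. b = blade_vertex n k 1)"
proof
  assume "dw_edge m n 1 b"
  then obtain k where "k \<in> {1..m}" "b = (k - 1) * (n - 1) + 2"
    using assms unfolding dw_edge_def by auto
  then show "\<exists>k<m. b = blade_vertex n k 1"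
    unfolding blade_vertex_def by (intro exI[of _ "k - 1"]) auto
next
  assume "\<exists>k<m. b = blade_vertex n k 1"
  then obtain k where "k < m" "b = blade_vertex n k 1"
    by blast
  then show "dw_edge m n 1 b"
    unfolding dw_edge_def blade_vertex_def by (intro disjI1 bexI[of _ "Suc k"]) auto
qed

lemma dw_edge_blade_iff:
  assumes "2 \<le> n" and "k < m" and "1 \<le> c" and "c \<le> n - 1"
  shows "dw_edge m n (blade_vertex n k c) b \<longleftrightarrow>
           b = (if c < n - 1 then blade_vertex n k (Suc c) else 1)"
proof
  assume "dw_edge m n (blade_vertex n k c) b"
  then have "(\<exists>k'\<in>{1..m}. \<exists>i\<in>{2..n - 1}.
               blade_vertex n k c = (k' - 1) * (n - 1) + i \<and> b = (k' - 1) * (n - 1) + i + 1) \<or>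
             (\<exists>k'\<in>{1..m}. blade_vertex n k c = (k' - 1) * (n - 1) + n \<and> b = 1)"
    using blade_vertex_neq_hub[OF assms(3)] unfolding dw_edge_def by blast
  then consider
      k' i where "k' \<in> {1..m}" "i \<in> {2..n - 1}"
        "blade_vertex n k c = blade_vertex n (k' - 1) (i - 1)" "b = blade_vertex n (k' - 1) i"
    | k' where "k' \<in> {1..m}" "blade_vertex n k c = blade_vertex n (k' - 1) (n - 1)" "b = 1"
    using assms(1) unfolding blade_vertex_def by fastforce
  then show "b = (if c < n - 1 then blade_vertex n k (Suc c) else 1)"
  proof cases
    case (1 k' i)
    then have "k = k' - 1 \<and> c = i - 1"
      using assms blade_vertex_eq_iff[of c n "i - 1" k "k' - 1"] by auto
    with 1 show ?thesis
      by auto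
  next
    case (2 k')
    then show ?thesis
      using assms blade_vertex_eq_iff[of c n "n - 1" k "k' - 1"] by auto
  qed
next
  assume b: "b = (if c < n - 1 then blade_vertex n k (Suc c) else 1)"
  show "dw_edge m n (blade_vertex n k c) b"
  proof (cases "c < n - 1")
    case True
    then show ?thesis
      using b assms unfolding dw_edge_def blade_vertex_def
      by (intro disjI2 disjI1 bexI[of _ "Suc k"] bexI[of _ "Suc c"]) auto
  next
    case False
    then show ?thesis
      using b assms unfolding dw_edge_def blade_vertex_def
      by (intro disjI2 disjI2 bexI[of _ "Suc k"]) auto
  qed
qed

context
  fixes m n :: nat
  assumes n: "2 \<le> n"
begin

lemma card_dw_walks_Suc_hub:
  "card (dw_walks m n (Suc L) 1 j) = (\<Sum>k<m. card (dw_walks m n L (blade_vertex n k 1) j))"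
proof -
  have "{x \<in> dw_verts m n. dw_edge m n 1 x} = (\<lambda>k. blade_vertex n k 1) ` {..<m}"
    using dw_edge_hub_iff[OF n, of m] blade_vertex_in_dw_verts[of _ m 1 n] n by auto
  moreover have "inj_on (\<lambda>k. blade_vertex n k 1) {..<m}"
    using n by (intro inj_onI) (simp add: blade_vertex_eq_iff)
  moreover have "1 \<in> dw_verts m n"
    by (simp add: dw_verts_def)
  ultimately show ?thesis
    unfolding dw_walks_eq_walks by (simp add: card_walks_Suc dw_verts_def sum.reindex)
qed

lemma card_dw_walks_Suc_blade:
  assumes "k < m" and "1 \<le> c" and "c \<le> n - 1"
  shows "card (dw_walks m n (Suc L) (blade_vertex n k c) j) =
           card (dw_walks m n L (if c < n - 1 then blade_vertex n k (Suc c) else 1) j)"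
proof -
  let ?next = "if c < n - 1 then blade_vertex n k (Suc c) else 1"
  have "?next \<in> dw_verts m n"
    using assms blade_vertex_in_dw_verts[OF assms(1), of "Suc c"] by (simp add: dw_verts_def)
  then have "{x \<in> dw_verts m n. dw_edge m n (blade_vertex n k c) x} = {?next}"
    using dw_edge_blade_iff[OF n assms] by blast
  then show ?thesis
    unfolding dw_walks_eq_walks
    using card_walks_Suc[OF finite_dw_verts blade_vertex_in_dw_verts[OF assms]] by simp
qed

lemma card_dw_walks_along_blade:
  assumes "k < m" and "1 \<le> c" and "c + t \<le> n - 1"
  shows "card (dw_walks m n (t + L) (blade_vertex n k c) j) =
           card (dw_walks m n L (blade_vertex n k (c + t)) j)"
  using assms(2,3)
proof (induction t arbitrary: c)
  case (Suc t)
  then have "card (dw_walks m n (Suc t + L) (blade_vertex n k c) j) =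
               card (dw_walks m n (t + L) (blade_vertex n k (Suc c)) j)"
    using card_dw_walks_Suc_blade[OF assms(1), of c] by simp
  also have "\<dots> = card (dw_walks m n L (blade_vertex n k (c + Suc t)) j)"
    using Suc by simp
  finally show ?case .
qed simp

lemma card_dw_walks_blade_to_hub:
  assumes "k < m" and "1 \<le> c" and "c \<le> n - 1"
  shows "card (dw_walks m n (n - c + L) (blade_vertex n k c) j) = card (dw_walks m n L 1 j)"
proof -
  have "n - c + L = (n - 1 - c) + Suc L"
    using assms by simp
  then have "card (dw_walks m n (n - c + L) (blade_vertex n k c) j) =
               card (dw_walks m n (Suc L) (blade_vertex n k (c + (n - 1 - c))) j)"
    using assms by (simp only:) (rule card_dw_walks_along_blade, simp_all)
  also have "\<dots> = card (dw_walks m n (Suc L) (blade_vertex n k (n - 1)) j)"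
    using assms by simp
  also have "\<dots> = card (dw_walks m n L 1 j)"
    using card_dw_walks_Suc_blade[OF assms(1), of "n - 1"] n by simp
  finally show ?thesis .
qed

lemma card_dw_walks_hub_period:
  "card (dw_walks m n (q * n + L) 1 j) = m ^ q * card (dw_walks m n L 1 j)"
proof (induction q)
  case (Suc q)
  have "Suc q * n + L = Suc (n - 1 + (q * n + L))"
    using n by simp
  then have "card (dw_walks m n (Suc q * n + L) 1 j) =
               (\<Sum>k<m. card (dw_walks m n (n - 1 + (q * n + L)) (blade_vertex n k 1) j))"
    by (simp only: card_dw_walks_Suc_hub)
  also have "\<dots> = m * card (dw_walks m n (q * n + L) 1 j)"
    using card_dw_walks_blade_to_hub[of _ 1] n by simp
  finally show ?case
    using Suc by simp
qed simp

lemma card_dw_walks_from_hub_le_1: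
  assumes "L < n"
  shows "card (dw_walks m n L 1 j) \<le> 1"
proof (cases L)
  case 0
  then show ?thesis
    by (simp add: dw_walks_eq_walks card_walks_0)
next
  case (Suc L')
  have "card (dw_walks m n L 1 j) = (\<Sum>k<m. card (dw_walks m n 0 (blade_vertex n k (Suc L')) j))"
    unfolding Suc card_dw_walks_Suc_hub using Suc assms card_dw_walks_along_blade[of _ 1 L' 0]
    by simp
  also have "\<dots> = card {k \<in> {..<m}. blade_vertex n k (Suc L') = j}"
    using Suc assms
    by (simp add: dw_walks_eq_walks card_walks_0 blade_vertex_in_dw_verts sum.inter_filter[symmetric])
  also have "\<dots> \<le> 1"
    using Suc assms blade_vertex_eq_iff[of "Suc L'" n "Suc L'"] by (auto simp: card_le_Suc0_iff_eq)
  finally show ?thesis .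
qed

lemma card_dw_walks_period:
  assumes "i \<in> dw_verts m n"
  shows "card (dw_walks m n (q * n + (n - 1)) i j) = m ^ q * card (dw_walks m n (n - 1) i j)"
  using assms n
proof (cases rule: dw_verts_cases)
  case 1
  then show ?thesis
    by (simp only: card_dw_walks_hub_period)
next
  case (2 k c)
  have "q * n + (n - 1) = n - c + (q * n + (c - 1))" "n - 1 = n - c + (c - 1)"
    using 2 by auto
  then show ?thesis
    using 2 by (simp only: card_dw_walks_blade_to_hub card_dw_walks_hub_period)
qed

lemma card_short_dw_walks_le_1:
  assumes "i \<in> dw_verts m n"
  shows "card (dw_walks m n (n - 1) i j) \<le> 1"
  using assms n
proof (cases rule: dw_verts_cases)
  case 1
  show ?thesis
    unfolding 1 using n by (intro card_dw_walks_from_hub_le_1) simp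
next
  case (2 k c)
  then have "card (dw_walks m n (n - 1) i j) = card (dw_walks m n (c - 1) 1 j)"
    using card_dw_walks_blade_to_hub[of k c "c - 1" j] by simp
  also have "\<dots> \<le> 1"
    using 2 n by (intro card_dw_walks_from_hub_le_1) simp
  finally show ?thesis .
qed

end

theorem lemma2p6:
  fixes m n p i j :: nat
  assumes "m \<ge> 1" and "n \<ge> 3" and "p \<ge> 2"
    and "i \<in> dw_verts m n" and "j \<in> dw_verts m n"
  shows "(dw_walks m n (p * n - 1) i j \<noteq> {} \<longleftrightarrow> dw_walks m n (n - 1) i j \<noteq> {}) \<and>
         (dw_walks m n (n - 1) i j \<noteq> {} \<longrightarrow> card (dw_walks m n (p * n - 1) i j) = m ^ (p - 1))"
proof -
  have walk_length: "p * n - 1 = (p - 1) * n + (n - 1)"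
    using assms(2,3) by (cases p) auto
  have period: "card (dw_walks m n (p * n - 1) i j) = m ^ (p - 1) * card (dw_walks m n (n - 1) i j)"
    unfolding walk_length using assms by (intro card_dw_walks_period) auto
  have le_1: "card (dw_walks m n (n - 1) i j) \<le> 1"
    using assms by (intro card_short_dw_walks_le_1) auto
  have nonempty_iff: "dw_walks m n L i j \<noteq> {} \<longleftrightarrow> card (dw_walks m n L i j) \<noteq> 0" for L
    by (simp add: dw_walks_eq_walks finite_walks)
  show ?thesis
    unfolding nonempty_iff period using le_1 assms(1) by auto
qed

end
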